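(* Let $m\in\mathbb N$ and let $\mathcal P_m$ be the $1$-dimensional PVAS (transitions and steps only; initial configuration irrelevant) with states $\{\perp,0,1,\dots,m\}$, stack alphabet $\{\gamma_0,\dots,\gamma_m\}$, and transitions: $(\perp,0,\mathrm{pop}(\gamma_0),0)$, $(0,+1,\mathrm{nop},\perp)$, and for each $i\in\{1,\dots,m\}$: $(\perp,0,\mathrm{pop}(\gamma_i),i)$, $(i,+1,\mathrm{push}(\gamma_{i-1}),\perp)$, and $(i,-1,\mathrm{push}(\gamma_{i-1}),i)$. Then for all $n\in\mathbb N$ and $j\in\{0,\dots,m\}$, $$A_j(n)=\max\{c\in\mathbb N\mid (\perp,n,\gamma_j)\xrightarrow{*}(\perp,c,\varepsilon)\},$$ and in particular this maximum exists.
   Context: Ackermann functions $A_j:\mathbb N\to\mathbb N$: $A_0(n)=n+1$ and $A_j(n)=A_{j-1}^{n+1}(1)$ for $j>0$ (the $(n+1)$-fold iterate). For a $1$-dimensional PVAS with transition set $\Delta\subseteq Q\times\mathbb Z\times\mathrm{Op}(\Gamma)\times Q$, configurations are $(q,c,w)\in Q\times\mathbb N\times\Gamma^*$, and $(p,c,u)\to(q,d,v)$ iff some $(p,a,\mathrm{op},q)\in\Delta$ has $d=c+a\ge 0$ and either $\mathrm{op}=\mathrm{push}(\gamma)$, $v=u\gamma$; or $\mathrm{op}=\mathrm{pop}(\gamma)$, $u=v\gamma$; or $\mathrm{op}=\mathrm{nop}$, $u=v$ (the top of the stack is the last letter). $\xrightarrow{*}$ is the reflexive transitive closure; $\varepsilon$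 is the empty word. *)

theory Defs
  imports Main
begin

fun ack :: "nat \<Rightarrow> nat \<Rightarrow> nat" where
  "ack 0 n = n + 1"
| "ack (Suc j) n = (ack j ^^ (n + 1)) 1"

datatype 'g op = Push 'g | Pop 'g | Nop

text \<open>Configurations are (q, c, w) with c :: nat,
  w a stack word whose top is the last letter.\<close>
type_synonym ('q, 'g) pvas = "('q \<times> int \<times> 'g op \<times> 'q) set"
type_synonym ('q, 'g) config = "'q \<times> nat \<times> 'g list"

definition pvas_step :: "('q, 'g) pvas \<Rightarrow> ('q, 'g) config \<Rightarrow> ('q, 'g) config \<Rightarrow> bool" where
  "pvas_step \<Delta> C D \<longleftrightarrow>
     (case C of (p, c, u) \<Rightarrow> case D of (q, d, v) \<Rightarrow>
       (\<exists>a opr. (p, a, opr, q) \<in> \<Delta> \<and> int d = int c + a \<and>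
          (case opr of Push \<gamma> \<Rightarrow> v = u @ [\<gamma>]
                     | Pop \<gamma> \<Rightarrow> u = v @ [\<gamma>]
                     | Nop \<Rightarrow> u = v)))"

definition pvas_reach :: "('q, 'g) pvas \<Rightarrow> ('q, 'g) config \<Rightarrow> ('q, 'g) config \<Rightarrow> bool" where
  "pvas_reach \<Delta> = (pvas_step \<Delta>)\<^sup>*\<^sup>*"

text \<open>The PVAS P_m.  States: None = bottom, Some i = state i (i \<le> m).
  Stack symbols: i represents gamma_i (i \<le> m).\<close>
definition P :: "nat \<Rightarrow> (nat option, nat) pvas" where
  "P m = {(None, 0, Pop 0, Some 0), (Some 0, 1, Nop, None)}
     \<union> (\<Union>i\<in>{1..m}. {(None, 0, Pop i, Some i),
                     (Some i, 1, Push (i - 1), None),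
                     (Some i, -1, Push (i - 1), Some i)})"

end

theory Submission
  imports Defs
begin

text \<open>Read the stack [\<gamma>_i1, ..., \<gamma>_ik] together with the counter c as the number
  A_i1(... A_ik(c) ...), and a configuration in state i as if \<gamma>_i were still on top of the
  stack.  No transition of P_m increases this potential; in state i \<ge> 1 this rests on
  A_i(c+1) = A_(i-1)(A_i(c)) and A_(i-1)(c+1) \<le> A_i(c).  Hence every run from (\<bottom>, n, \<gamma>_j)
  to an empty stack ends with counter at most A_j(n).  Conversely, the recursion
  A_i(c+1) = A_(i-1)(A_i(c)) is executed literally: decrement c while pushing \<gamma>_(i-1) each
  time, then increment once and unwind the pushed symbols, so A_j(n) is attained.\<close>

lemma ack_Suc_Suc: "ack (Suc j) (Suc n) = ack j (ack (Suc j) n)"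
  by simp

lemma less_ack: "n < ack j n"
proof (induction j arbitrary: n)
  case 0
  then show ?case by simp
next
  case (Suc j)
  note less_ack_j = Suc.IH
  show ?case
  proof (induction n)
    case 0
    then show ?case using less_ack_j[of 1] by simp
  next
    case (Suc n)
    then show ?case using less_ack_j[of "ack (Suc j) n"] by (simp only: ack_Suc_Suc)
  qed
qed

lemma ack_less_ack_Suc: "ack j n < ack j (Suc n)"
proof (cases j)
  case 0
  then show ?thesis by simp
next
  case (Suc k)
  then show ?thesis using less_ack[where n="ack (Suc k) n" and j=k] by (simp only: ack_Suc_Suc)
qed

lemma ack_mono: "n \<le> n' \<Longrightarrow> ack j n \<le> ack j n'"
  using lift_Suc_mono_le[of "ack j", OF less_imp_le[OF ack_less_ack_Suc]] by blast

lemma ack_Suc_le_ack_Suc_level: "ack j (Suc n) \<le> ack (Suc j) n"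
proof (induction n)
  case 0
  then show ?case by simp
next
  case (Suc n)
  have "Suc (Suc n) \<le> ack (Suc j) n"
    using Suc.IH less_ack[where n="Suc n" and j=j] by linarith
  then have "ack j (Suc (Suc n)) \<le> ack j (ack (Suc j) n)"
    by (rule ack_mono)
  then show ?case by (simp only: ack_Suc_Suc)
qed

definition ack_stack :: "nat list \<Rightarrow> nat \<Rightarrow> nat" where
  "ack_stack w n = foldr ack w n"

lemma ack_stack_snoc [simp]: "ack_stack (w @ [j]) n = ack_stack w (ack j n)"
  by (simp add: ack_stack_def)

lemma ack_stack_mono: "n \<le> n' \<Longrightarrow> ack_stack w n \<le> ack_stack w n'"
  by (induction w) (auto simp: ack_stack_def intro: ack_mono)

fun potential :: "(nat option, nat) config \<Rightarrow> nat" where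
  "potential (None, c, w) = ack_stack w c"
| "potential (Some i, c, w) = ack_stack w (ack i c)"

lemma P_transitionE:
  assumes "(p, a, opr, q) \<in> P m"
  obtains i where "i \<le> m" "p = None" "a = 0" "opr = Pop i" "q = Some i"
    | "p = Some 0" "a = 1" "opr = Nop" "q = None"
    | i where "p = Some (Suc i)" "Suc i \<le> m" "a = 1" "opr = Push i" "q = None"
    | i where "p = Some (Suc i)" "Suc i \<le> m" "a = -1" "opr = Push i" "q = Some (Suc i)"
  using assms unfolding P_def by (auto simp: Suc_le_eq gr0_conv_Suc)

lemma potential_step_le:
  assumes "pvas_step (P m) (p, c, u) (q, d, v)"
  shows "potential (q, d, v) \<le> potential (p, c, u)"
proof -
  from assms obtain a opr where t: "(p, a, opr, q) \<in> P m" and d: "int d = int c + a"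
    and stack: "case opr of Push \<gamma> \<Rightarrow> v = u @ [\<gamma>] | Pop \<gamma> \<Rightarrow> u = v @ [\<gamma>] | Nop \<Rightarrow> u = v"
    unfolding pvas_step_def by auto
  from t show ?thesis
  proof (cases rule: P_transitionE)
    case 2
    then have "d = Suc c" "v = u" using d stack by auto
    then show ?thesis using 2 by simp
  next
    case (3 i)
    then have "d = Suc c" "v = u @ [i]" using d stack by auto
    then show ?thesis
      using 3 ack_stack_mono[OF ack_Suc_le_ack_Suc_level[of i c], of u] by simp
  next
    case (4 i)
    then have "c = Suc d" "v = u @ [i]" using d stack by auto
    then show ?thesis using 4 by (simp add: ack_Suc_Suc del: ack.simps)
  qed (use d stack in auto)
qed

lemma potential_reach_le:
  assumes "pvas_reach (P m) C D"
  shows "potential D \<le> potential C"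
  using assms unfolding pvas_reach_def
  by (induction rule: rtranclp_induct) (auto dest: potential_step_le order_trans)

lemma step_pop: "i \<le> m \<Longrightarrow> pvas_step (P m) (None, c, w @ [i]) (Some i, c, w)"
  unfolding pvas_step_def P_def by (cases "i = 0") auto

lemma step_increment: "pvas_step (P m) (Some 0, c, w) (None, Suc c, w)"
  unfolding pvas_step_def P_def by auto

lemma step_push_increment:
  "Suc i \<le> m \<Longrightarrow> pvas_step (P m) (Some (Suc i), c, w) (None, Suc c, w @ [i])"
  unfolding pvas_step_def P_def by force

lemma step_push_decrement:
  "Suc i \<le> m \<Longrightarrow> pvas_step (P m) (Some (Suc i), Suc c, w) (Some (Suc i), c, w @ [i])"
  unfolding pvas_step_def P_def by force

lemma reach_ack_from_state:
  "j \<le> m \<Longrightarrow> pvas_reach (P m) (Some j, c, w) (None, ack j c, w)"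
proof (induction j arbitrary: c w)
  case 0
  then show ?case using step_increment unfolding pvas_reach_def by fastforce
next
  case (Suc i)
  have unwind: "pvas_reach (P m) (None, n, v @ [i]) (None, ack i n, v)" for n v
    using step_pop[of i m n v] Suc unfolding pvas_reach_def
    by (simp add: converse_rtranclp_into_rtranclp)
  show ?case
  proof (induction c arbitrary: w)
    case 0
    show ?case
      using step_push_increment[OF Suc.prems, of 0 w] unwind[of 1 w] unfolding pvas_reach_def
      by (simp add: converse_rtranclp_into_rtranclp)
  next
    case (Suc c)
    have "pvas_reach (P m) (Some (Suc i), Suc c, w) (None, ack (Suc i) c, w @ [i])"
      using step_push_decrement[OF \<open>Suc i \<le> m\<close>, of c w] Suc.IH[of "w @ [i]"]
      unfolding pvas_reach_def by (simp add: converse_rtranclp_into_rtranclp)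
    with unwind[of "ack (Suc i) c" w] show ?case
      unfolding pvas_reach_def by (simp only: ack_Suc_Suc)
  qed
qed

lemma reach_ack_from_stack:
  "j \<le> m \<Longrightarrow> pvas_reach (P m) (None, n, w @ [j]) (None, ack j n, w)"
  using step_pop[of j m n w] reach_ack_from_state[of j m n w] unfolding pvas_reach_def
  by (simp add: converse_rtranclp_into_rtranclp)

lemma reach_empty_le_ack:
  "pvas_reach (P m) (None, n, [j]) (None, c, []) \<Longrightarrow> c \<le> ack j n"
  using potential_reach_le[of m "(None, n, [j])" "(None, c, [])"] by (simp add: ack_stack_def)

theorem mainTheorem4:
  fixes m n j :: nat
  assumes "j \<le> m"
  shows "(\<exists>C. pvas_reach (P m) (None, n, [j]) (None, C, []) \<and>
              (\<forall>c. pvas_reach (P m) (None, n, [j]) (None, c, []) \<longrightarrow> c \<le> C))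
       \<and> ack j n = Max {c. pvas_reach (P m) (None, n, [j]) (None, c, [])}"
proof -
  let ?R = "{c. pvas_reach (P m) (None, n, [j]) (None, c, [])}"
  have attained: "pvas_reach (P m) (None, n, [j]) (None, ack j n, [])"
    using reach_ack_from_stack[OF assms, of n "[]"] by simp
  note bounded = reach_empty_le_ack[of m n j]
  have "finite ?R"
    by (rule finite_subset[of _ "{..ack j n}"]) (auto dest: bounded)
  then have "Max ?R = ack j n"
    by (rule Max_eqI) (use attained bounded in auto)
  then show ?thesis
    using attained bounded by auto
qed

end
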